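(* Let $\lambda_1,\lambda_2>0$ and consider the linear saddle $\dot x=\lambda_1x$, $\dot y=-\lambda_2y$ in the bidisc $\{|x|,|y|\le1\}\subset\mathbb{C}^2$, with first integral $H=x^{1/\lambda_1}y^{1/\lambda_2}$. Fix $0<h<1$ and let $U_s=\{|H|<h\}\cap\{|x|,|y|\le1\}$. Then there exists a pair $v=(v_1,v_I)$ of smooth real vector fields on $U_s$ satisfying $d(\log H)(v_1)=1$ and $d(\log H)(v_I)=i$, such that: (1) both the negative-time flow of $v_1$ and the flow of $v_I$ do not increase $|x|$ and $|y|$; (2) both $v_1$ and $v_I$ are tangent to the lines $\{y=\mathrm{const}\}$ near $(0,1)$ and to the lines $\{x=\mathrm{const}\}$ near $(1,0)$.
   Context: $d(\log H)$ denotes the differential of any local branch of $\log H$ (which is single-valued as a one-form). A real vector field on $\mathbb{C}^2$ is a vector field on the underlying $\mathbb{R}^4$. *)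

theory Defs
  imports "HOL-Analysis.Analysis"
begin

text \<open>A real vector field on C^2
  (= R^4) is a map complex \<times> complex \<Rightarrow> complex \<times> complex, the value being a real
  tangent vector (a,b) \<in> C^2 = R^4.\<close>

text \<open>In finite dimensions this is exactly smoothness (all iterated derivatives exist and are
  continuous).\<close>
coinductive smooth_on :: "'a::real_normed_vector set \<Rightarrow> ('a \<Rightarrow> 'b::real_normed_vector) \<Rightarrow> bool"
  where
  smooth_onI: "(\<And>p. p \<in> S \<Longrightarrow> (f has_derivative D p) (at p within S)) \<Longrightarrow>
     (\<And>u. smooth_on S (\<lambda>p. D p u)) \<Longrightarrow> smooth_on S f"

definition absH :: "real \<Rightarrow> real \<Rightarrow> complex \<times> complex \<Rightarrow> real" where
  "absH l1 l2 p = norm (fst p) powr (1 / l1) * norm (snd p) powr (1 / l2)"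

definition Us :: "real \<Rightarrow> real \<Rightarrow> real \<Rightarrow> (complex \<times> complex) set" where
  "Us l1 l2 h = {p. absH l1 l2 p < h \<and> norm (fst p) \<le> 1 \<and> norm (snd p) \<le> 1}"

text \<open>The one-form d(log H) = dx/(l1 x) + dy/(l2 y) (differential of any local branch of
  log H = (log x)/l1 + (log y)/l2, defined where x y \<noteq> 0), applied at the point p
  to the real tangent vector w = (a,b).\<close>
definition dlogH :: "real \<Rightarrow> real \<Rightarrow> complex \<times> complex \<Rightarrow> complex \<times> complex \<Rightarrow> complex" where
  "dlogH l1 l2 p w = fst w / (of_real l1 * fst p) + snd w / (of_real l2 * snd p)"

definition flow_nonincreasing ::
  "(complex \<times> complex) set \<Rightarrow> (complex \<times> complex \<Rightarrow> complex \<times> complex) \<Rightarrow> (complex \<times> complex \<Rightarrow> real) \<Rightarrow> bool"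
  where
  "flow_nonincreasing S w g \<longleftrightarrow>
     (\<forall>(\<gamma>::real \<Rightarrow> complex \<times> complex) a b. a \<le> b \<longrightarrow> \<gamma> ` {a..b} \<subseteq> S \<longrightarrow>
        (\<forall>t\<in>{a..b}. (\<gamma> has_vector_derivative w (\<gamma> t)) (at t within {a..b})) \<longrightarrow>
        (\<forall>t1\<in>{a..b}. \<forall>t2\<in>{a..b}. t1 \<le> t2 \<longrightarrow> g (\<gamma> t2) \<le> g (\<gamma> t1)))"

end

theory Submission
  imports Defs "HOL-Computational_Algebra.Polynomial"
begin

text \<open>Both fields are diagonal, \<open>v\<^sub>1 = (a\<^sub>1 x, a\<^sub>2 y)\<close> and \<open>v\<^sub>I = (i a\<^sub>1 x, i a\<^sub>2 y)\<close>, with smooth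
  weights \<open>a\<^sub>1 = \<lambda>\<^sub>1 \<alpha>\<close>, \<open>a\<^sub>2 = \<lambda>\<^sub>2 (1 - \<alpha>)\<close>, \<open>0 \<le> \<alpha> \<le> 1\<close>, so that \<open>d(log H)\<close> takes the values
  \<open>\<alpha> + (1 - \<alpha>) = 1\<close> and \<open>i\<close>.  The flow of \<open>-v\<^sub>1\<close> contracts both coordinates and that of \<open>v\<^sub>I\<close>
  rotates them, so neither increases \<open>|x|\<close> or \<open>|y|\<close>.  Taking \<open>\<alpha>\<close> to be a smooth step in
  \<open>|y|\<^sup>2 - |x|\<^sup>2\<close>, equal to \<open>1\<close> near \<open>(0,1)\<close> and to \<open>0\<close> near \<open>(1,0)\<close>, kills the \<open>y\<close>-component,
  resp. the \<open>x\<close>-component, there.  All of this holds on the whole of \<open>\<complex>\<^sup>2\<close>.  Smoothness is obtained by exhibiting \<open>\<alpha>\<close> as a member of a class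
  of functions closed under differentiation, built from \<open>exp (-1/t)\<close>.\<close>

definition exp_flat :: "real poly \<Rightarrow> real \<Rightarrow> real" where
  "exp_flat P t = (if t > 0 then poly P (1/t) * exp (-1/t) else 0)"

text \<open>In the variable \<open>s = 1/t\<close>, \<open>d/dt (P(s) e\<^sup>-\<^sup>s) = s\<^sup>2 (P(s) - P'(s)) e\<^sup>-\<^sup>s\<close>.\<close>
definition exp_flat_deriv_poly :: "real poly \<Rightarrow> real poly" where
  "exp_flat_deriv_poly P = [:0,0,1:] * (P - pderiv P)"

lemma tendsto_poly_times_exp_neg_at_top:
  "((\<lambda>s::real. poly P s * exp (-s)) \<longlongrightarrow> 0) at_top"
proof -
  have "((\<lambda>s. \<Sum>i\<le>degree P. coeff P i * (s ^ i / exp s)) \<longlongrightarrow> 0) at_top"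
    by (intro tendsto_null_sum tendsto_mult_right_zero tendsto_power_div_exp_0)
  moreover have "(\<Sum>i\<le>degree P. coeff P i * (s ^ i / exp s)) = poly P s * exp (-s)" for s
    by (simp add: poly_altdef exp_minus sum_distrib_right divide_inverse mult.assoc)
  ultimately show ?thesis by simp
qed

lemma tendsto_poly_inverse_times_exp_at_right_0:
  "((\<lambda>t::real. poly P (1/t) * exp (-1/t)) \<longlongrightarrow> 0) (at_right 0)"
  using filterlim_compose[OF tendsto_poly_times_exp_neg_at_top filterlim_inverse_at_top_right]
  by (simp add: o_def divide_inverse)

lemma exp_flat_has_real_derivative_pos:
  assumes "t > 0"
  shows "(exp_flat P has_real_derivative exp_flat (exp_flat_deriv_poly P) t) (at t)"
proof -
  have "((\<lambda>t. poly P (1/t) * exp (-1/t)) has_real_derivative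
          poly P (1/t) * (exp (-1/t) * (1/t^2)) + poly (pderiv P) (1/t) * (- 1/t^2) * exp (-1/t)) (at t)"
    using assms by (auto intro!: derivative_eq_intros simp: power2_eq_square)
  also have "poly P (1/t) * (exp (-1/t) * (1/t^2)) + poly (pderiv P) (1/t) * (- 1/t^2) * exp (-1/t)
      = exp_flat (exp_flat_deriv_poly P) t"
    using assms by (simp add: exp_flat_def exp_flat_deriv_poly_def algebra_simps power2_eq_square)
  finally show ?thesis
    by (rule has_field_derivative_transform_within_open[where S = "{0<..}"])
      (use assms in \<open>auto simp: exp_flat_def\<close>)
qed

lemma exp_flat_has_real_derivative_0: "(exp_flat P has_real_derivative 0) (at 0)"
proof -
  have "((\<lambda>h. exp_flat P h / h) \<longlongrightarrow> 0) (at_left 0)"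
    by (rule tendsto_eventually)
      (auto simp: exp_flat_def eventually_at_left_field intro!: exI[of _ "-1"])
  moreover have "\<forall>\<^sub>F h in at_right 0. poly ([:0,1:] * P) (1/h) * exp (-1/h) = exp_flat P h / h"
    by (auto simp: exp_flat_def eventually_at_right_field intro!: exI[of _ 1])
  then have "((\<lambda>h. exp_flat P h / h) \<longlongrightarrow> 0) (at_right 0)"
    by (rule Lim_transform_eventually[OF tendsto_poly_inverse_times_exp_at_right_0])
  ultimately show ?thesis
    by (simp add: has_field_derivative_iff exp_flat_def filterlim_at_split)
qed

lemma exp_flat_has_real_derivative:
  "(exp_flat P has_real_derivative exp_flat (exp_flat_deriv_poly P) t) (at t)"
proof (cases t "0::real" rule: linorder_cases)
  case less
  have "(exp_flat P has_real_derivative 0) (at t)"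
    by (rule has_field_derivative_transform_within_open[OF DERIV_const, where S = "{..<0}"])
      (use less in \<open>auto simp: exp_flat_def\<close>)
  then show ?thesis using less by (simp add: exp_flat_def)
next
  case equal
  then show ?thesis using exp_flat_has_real_derivative_0 by (simp add: exp_flat_def)
qed (rule exp_flat_has_real_derivative_pos)

lemma has_derivative_exp_flat:
  assumes "(f has_derivative Df) (at x within S)"
  shows "((\<lambda>p. exp_flat P (f p)) has_derivative (\<lambda>u. exp_flat (exp_flat_deriv_poly P) (f x) * Df u))
    (at x within S)"
  using has_derivative_compose[OF assms exp_flat_has_real_derivative[unfolded has_field_derivative_def]] .

lemma exp_flat_1_pos: "t > 0 \<Longrightarrow> exp_flat 1 t > 0"
  and exp_flat_1_nonneg: "exp_flat 1 t \<ge> 0"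
  and exp_flat_eq_0: "t \<le> 0 \<Longrightarrow> exp_flat P t = 0"
  by (auto simp: exp_flat_def)

inductive_set smooth_gen :: "('a::real_normed_vector \<Rightarrow> real) set" where
  smooth_gen_const: "(\<lambda>p. c) \<in> smooth_gen"
| smooth_gen_linear: "bounded_linear L \<Longrightarrow> L \<in> smooth_gen"
| smooth_gen_add: "f \<in> smooth_gen \<Longrightarrow> g \<in> smooth_gen \<Longrightarrow> (\<lambda>p. f p + g p) \<in> smooth_gen"
| smooth_gen_mult: "f \<in> smooth_gen \<Longrightarrow> g \<in> smooth_gen \<Longrightarrow> (\<lambda>p. f p * g p) \<in> smooth_gen"
| smooth_gen_inverse: "f \<in> smooth_gen \<Longrightarrow> (\<forall>p. f p \<noteq> 0) \<Longrightarrow> (\<lambda>p. inverse (f p)) \<in> smooth_gen"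
| smooth_gen_exp_flat: "f \<in> smooth_gen \<Longrightarrow> (\<lambda>p. exp_flat P (f p)) \<in> smooth_gen"

lemma smooth_gen_has_derivative:
  assumes "f \<in> smooth_gen"
  obtains D where "\<And>p. (f has_derivative D p) (at p)" "\<And>u. (\<lambda>p. D p u) \<in> smooth_gen"
proof -
  from assms have "\<exists>D. (\<forall>p. (f has_derivative D p) (at p)) \<and> (\<forall>u. (\<lambda>p. D p u) \<in> smooth_gen)"
  proof induction
    case (smooth_gen_const c)
    show ?case by (rule exI[of _ "\<lambda>p u. 0"]) (auto intro: smooth_gen.intros)
  next
    case (smooth_gen_linear L)
    show ?case
      by (rule exI[of _ "\<lambda>p. L"])
        (auto intro: smooth_gen.intros bounded_linear.has_derivative[OF smooth_gen_linear has_derivative_ident])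
  next
    case (smooth_gen_add f g)
    then obtain Df Dg where Df: "\<forall>p. (f has_derivative Df p) (at p)" "\<forall>u. (\<lambda>p. Df p u) \<in> smooth_gen"
      and Dg: "\<forall>p. (g has_derivative Dg p) (at p)" "\<forall>u. (\<lambda>p. Dg p u) \<in> smooth_gen" by blast
    show ?case
      by (intro exI[of _ "\<lambda>p u. Df p u + Dg p u"])
        (use Df Dg in \<open>auto intro: smooth_gen.smooth_gen_add has_derivative_add\<close>)
  next
    case (smooth_gen_mult f g)
    then obtain Df Dg where "\<forall>p. (f has_derivative Df p) (at p)" "\<forall>u. (\<lambda>p. Df p u) \<in> smooth_gen"
      "\<forall>p. (g has_derivative Dg p) (at p)" "\<forall>u. (\<lambda>p. Dg p u) \<in> smooth_gen" by blast
    with smooth_gen_mult.hyps show ?case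
      by (intro exI[of _ "\<lambda>p u. f p * Dg p u + Df p u * g p"])
        (auto intro!: smooth_gen.smooth_gen_add smooth_gen.smooth_gen_mult has_derivative_mult)
  next
    case (smooth_gen_inverse f)
    then obtain Df where "\<forall>p. (f has_derivative Df p) (at p)" "\<forall>u. (\<lambda>p. Df p u) \<in> smooth_gen" by blast
    moreover have "(\<lambda>p. (-1) * (inverse (f p) * Df p u * inverse (f p))) \<in> smooth_gen" for u
      using calculation smooth_gen_inverse
      by (intro smooth_gen.smooth_gen_mult smooth_gen.smooth_gen_const smooth_gen.smooth_gen_inverse) auto
    ultimately show ?case
      using smooth_gen_inverse.hyps
      by (intro exI[of _ "\<lambda>p u. - (inverse (f p) * Df p u * inverse (f p))"])
        (auto intro!: has_derivative_inverse)
  next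
    case (smooth_gen_exp_flat f P)
    then obtain Df where "\<forall>p. (f has_derivative Df p) (at p)" "\<forall>u. (\<lambda>p. Df p u) \<in> smooth_gen"
      by blast
    with smooth_gen_exp_flat.hyps show ?case
      by (intro exI[of _ "\<lambda>p u. exp_flat (exp_flat_deriv_poly P) (f p) * Df p u"])
        (auto intro!: smooth_gen.smooth_gen_mult smooth_gen.smooth_gen_exp_flat has_derivative_exp_flat)
  qed
  with that show ?thesis by blast
qed

lemma smooth_gen_smooth_on:
  assumes "f \<in> smooth_gen"
  shows "smooth_on S f"
  using assms
proof (coinduction arbitrary: f)
  case smooth_on
  then obtain D where "\<And>p. (f has_derivative D p) (at p)" "\<And>u. (\<lambda>p. D p u) \<in> smooth_gen"
    using smooth_gen_has_derivative by metis
  then show ?case by (auto intro: has_derivative_at_withinI)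
qed

lemma smooth_gen_diff:
  assumes "f \<in> smooth_gen" "g \<in> smooth_gen"
  shows "(\<lambda>p. f p - g p) \<in> smooth_gen"
  using smooth_gen_add[OF assms(1) smooth_gen_mult[OF smooth_gen_const assms(2)], of "-1"] by simp

lemma smooth_gen_divide:
  "f \<in> smooth_gen \<Longrightarrow> g \<in> smooth_gen \<Longrightarrow> (\<forall>p. g p \<noteq> 0) \<Longrightarrow> (\<lambda>p. f p / g p) \<in> smooth_gen"
  unfolding divide_inverse by (intro smooth_gen_mult smooth_gen_inverse)

lemma smooth_gen_sum:
  "finite A \<Longrightarrow> (\<And>i. i \<in> A \<Longrightarrow> f i \<in> smooth_gen) \<Longrightarrow> (\<lambda>p. \<Sum>i\<in>A. f i p) \<in> smooth_gen"
  by (induction A rule: finite_induct) (auto intro: smooth_gen_const smooth_gen_add)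

lemma smooth_gen_norm_sq_linear:
  fixes L :: "'a::real_normed_vector \<Rightarrow> 'b::euclidean_space"
  assumes "bounded_linear L"
  shows "(\<lambda>p. (norm (L p))\<^sup>2) \<in> smooth_gen"
proof -
  have "(\<lambda>p. \<Sum>b\<in>Basis. (L p \<bullet> b) * (L p \<bullet> b)) \<in> smooth_gen"
    by (intro smooth_gen_sum smooth_gen_mult smooth_gen_linear finite_Basis
        bounded_linear_compose[OF bounded_linear_inner_left assms])
  moreover have "(norm x)\<^sup>2 = (\<Sum>b\<in>Basis. (x \<bullet> b) * (x \<bullet> b))" for x :: 'b
    unfolding power2_norm_eq_inner by (rule euclidean_inner)
  ultimately show ?thesis by simp
qed

lemma smooth_on_const: "smooth_on S (\<lambda>p. c)"
proof (coinduction arbitrary: c)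
  case smooth_on
  show ?case by (auto intro!: exI[of _ "\<lambda>p u. 0"])
qed

lemma smooth_on_add:
  assumes "smooth_on S f" "smooth_on S g"
  shows "smooth_on S (\<lambda>p. f p + g p)"
  using assms
proof (coinduction arbitrary: f g)
  case smooth_on
  from smooth_on(1) obtain Df where Df: "\<And>p. p \<in> S \<Longrightarrow> (f has_derivative Df p) (at p within S)"
    "\<And>u. smooth_on S (\<lambda>p. Df p u)" by (cases rule: smooth_on.cases) blast
  from smooth_on(2) obtain Dg where Dg: "\<And>p. p \<in> S \<Longrightarrow> (g has_derivative Dg p) (at p within S)"
    "\<And>u. smooth_on S (\<lambda>p. Dg p u)" by (cases rule: smooth_on.cases) blast
  have "((\<lambda>p. f p + g p) has_derivative (\<lambda>u. Df p u + Dg p u)) (at p within S)" if "p \<in> S" for p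
    using Df(1) Dg(1) that by (auto intro: has_derivative_add)
  moreover have "\<exists>f' g'. (\<lambda>p. Df p u + Dg p u) = (\<lambda>p. f' p + g' p) \<and> smooth_on S f' \<and> smooth_on S g'"
    for u using Df(2) Dg(2) by (intro exI[of _ "\<lambda>p. Df p u"] exI[of _ "\<lambda>p. Dg p u"]) simp
  ultimately show ?case
    by (intro exI[of _ S] exI[of _ "\<lambda>p. f p + g p"] exI[of _ "\<lambda>p u. Df p u + Dg p u"]) auto
qed

lemma smooth_on_sum:
  assumes "finite A" "\<And>i. i \<in> A \<Longrightarrow> smooth_on S (f i)"
  shows "smooth_on S (\<lambda>p. \<Sum>i\<in>A. f i p)"
  using assms by (induction A rule: finite_induct) (auto intro: smooth_on_const smooth_on_add)

lemma smooth_on_linear_compose: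
  assumes "bounded_linear L" "smooth_on S f"
  shows "smooth_on S (\<lambda>p. L (f p))"
  using assms(2)
proof (coinduction arbitrary: f)
  case smooth_on
  then obtain Df where "\<And>p. p \<in> S \<Longrightarrow> (f has_derivative Df p) (at p within S)"
    "\<And>u. smooth_on S (\<lambda>p. Df p u)" by (cases rule: smooth_on.cases) blast
  then show ?case
    by (intro exI[of _ S] exI[of _ "\<lambda>p. L (f p)"] exI[of _ "\<lambda>p u. L (Df p u)"])
      (auto intro: bounded_linear.has_derivative[OF assms(1)])
qed

lemma smooth_on_scaleR_linear:
  fixes L :: "'a::real_normed_vector \<Rightarrow> 'b::euclidean_space"
  assumes "f \<in> smooth_gen" "bounded_linear L"
  shows "smooth_on S (\<lambda>p. f p *\<^sub>R L p)"
proof -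
  have "(\<lambda>p. f p * (L p \<bullet> b)) \<in> smooth_gen" for b
    by (intro smooth_gen_mult[OF assms(1)] smooth_gen_linear
        bounded_linear_compose[OF bounded_linear_inner_left assms(2)])
  then have "smooth_on S (\<lambda>p. \<Sum>b\<in>Basis. (f p * (L p \<bullet> b)) *\<^sub>R b)"
    by (intro smooth_on_sum smooth_on_linear_compose[OF bounded_linear_scaleR_left] smooth_gen_smooth_on)
      auto
  moreover have "(\<Sum>b\<in>Basis. (f p * (L p \<bullet> b)) *\<^sub>R b) = f p *\<^sub>R L p" for p
    by (subst (2) euclidean_representation[symmetric]) (simp add: scaleR_sum_right)
  ultimately show ?thesis by simp
qed

definition smooth_step :: "real \<Rightarrow> real" where
  "smooth_step t = exp_flat 1 (t + 1/2) / (exp_flat 1 (t + 1/2) + exp_flat 1 (1/2 - t))"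

lemma smooth_step_denominator_pos: "exp_flat 1 (t + 1/2) + exp_flat 1 (1/2 - t) > 0"
  using exp_flat_1_pos[of "t + 1/2"] exp_flat_1_pos[of "1/2 - t"]
    exp_flat_1_nonneg[of "t + 1/2"] exp_flat_1_nonneg[of "1/2 - t"]
  by linarith

lemma smooth_step_nonneg: "smooth_step t \<ge> 0"
  by (simp add: smooth_step_def exp_flat_1_nonneg)

lemma smooth_step_le_1: "smooth_step t \<le> 1"
  using smooth_step_denominator_pos[of t] exp_flat_1_nonneg[of "1/2 - t"]
  by (simp add: smooth_step_def divide_le_eq_1)

lemma smooth_step_eq_1: "t > 1/2 \<Longrightarrow> smooth_step t = 1"
  using exp_flat_1_pos[of "t + 1/2"] by (simp add: smooth_step_def exp_flat_eq_0)

lemma smooth_step_eq_0: "t < -1/2 \<Longrightarrow> smooth_step t = 0"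
  by (simp add: smooth_step_def exp_flat_eq_0)

lemma smooth_gen_smooth_step:
  assumes "f \<in> smooth_gen"
  shows "(\<lambda>p. smooth_step (f p)) \<in> smooth_gen"
  unfolding smooth_step_def using smooth_step_denominator_pos
  by (intro smooth_gen_divide smooth_gen_add smooth_gen_diff smooth_gen_exp_flat smooth_gen_const assms)
    (simp add: less_imp_neq[symmetric])

lemma has_real_derivative_inner_self_linear:
  assumes "bounded_linear \<pi>" and "(\<gamma> has_vector_derivative w) (at t within T)"
  shows "((\<lambda>t. \<pi> (\<gamma> t) \<bullet> \<pi> (\<gamma> t)) has_real_derivative 2 * (\<pi> (\<gamma> t) \<bullet> \<pi> w)) (at t within T)"
proof -
  have "((\<lambda>t. \<pi> (\<gamma> t)) has_vector_derivative \<pi> w) (at t within T)"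
    by (rule bounded_linear.has_vector_derivative[OF assms])
  from bounded_bilinear.has_vector_derivative[OF bounded_bilinear_inner this this] show ?thesis
    by (simp add: has_real_derivative_iff_has_vector_derivative inner_commute)
qed

lemma flow_nonincreasing_norm_linear:
  fixes \<pi> :: "complex \<times> complex \<Rightarrow> 'a::real_inner"
  assumes lin: "bounded_linear \<pi>" and inward: "\<And>p. p \<in> S \<Longrightarrow> \<pi> p \<bullet> \<pi> (w p) \<le> 0"
  shows "flow_nonincreasing S w (\<lambda>p. norm (\<pi> p))"
  unfolding flow_nonincreasing_def
proof (intro allI impI ballI)
  fix \<gamma> :: "real \<Rightarrow> complex \<times> complex" and a b t1 t2 :: real
  assume "a \<le> b" and \<gamma>_in: "\<gamma> ` {a..b} \<subseteq> S"
    and \<gamma>': "\<forall>t\<in>{a..b}. (\<gamma> has_vector_derivative w (\<gamma> t)) (at t within {a..b})"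
    and t1: "t1 \<in> {a..b}" and t2: "t2 \<in> {a..b}" and "t1 \<le> t2"
  define \<phi> where "\<phi> t = \<pi> (\<gamma> t) \<bullet> \<pi> (\<gamma> t)" for t
  have \<phi>': "(\<phi> has_real_derivative 2 * (\<pi> (\<gamma> t) \<bullet> \<pi> (w (\<gamma> t)))) (at t within {a..b})"
    if "t \<in> {a..b}" for t
    unfolding \<phi>_def using lin \<gamma>' that by (intro has_real_derivative_inner_self_linear) auto
  have "\<phi> t2 \<le> \<phi> t1"
  proof (rule DERIV_nonpos_imp_decreasing_open[OF \<open>t1 \<le> t2\<close>])
    fix t assume t: "t1 < t" "t < t2"
    then have "t \<in> interior {a..b}" and "\<gamma> t \<in> S" using t1 t2 \<gamma>_in by auto
    then show "\<exists>y. (\<phi> has_real_derivative y) (at t) \<and> y \<le> 0"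
      using \<phi>' at_within_interior inward interior_subset
      by (metis mult_nonneg_nonpos zero_le_numeral subsetD)
  next
    have "continuous_on {a..b} \<phi>"
      using \<phi>' by (intro DERIV_continuous_on) auto
    then show "continuous_on {t1..t2} \<phi>"
      by (rule continuous_on_subset) (use t1 t2 in auto)
  qed
  then show "norm (\<pi> (\<gamma> t2)) \<le> norm (\<pi> (\<gamma> t1))"
    by (simp add: \<phi>_def norm_le)
qed

definition saddle_cutoff :: "complex \<times> complex \<Rightarrow> real" where
  "saddle_cutoff p = smooth_step ((norm (snd p))\<^sup>2 - (norm (fst p))\<^sup>2)"

definition saddle_field :: "real \<Rightarrow> real \<Rightarrow> complex \<Rightarrow> complex \<times> complex \<Rightarrow> complex \<times> complex" where
  "saddle_field l1 l2 c p =
     ((l1 * saddle_cutoff p) *\<^sub>R (c * fst p), (l2 * (1 - saddle_cutoff p)) *\<^sub>R (c * snd p))"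

lemma smooth_gen_saddle_cutoff: "saddle_cutoff \<in> smooth_gen"
  unfolding saddle_cutoff_def
  by (intro smooth_gen_smooth_step smooth_gen_diff smooth_gen_norm_sq_linear bounded_linear_fst
      bounded_linear_snd)

lemma smooth_on_saddle_field: "smooth_on S (saddle_field l1 l2 c)"
proof -
  have "smooth_on S (\<lambda>p. (l1 * saddle_cutoff p) *\<^sub>R (c * fst p, 0) +
      (l2 * (1 - saddle_cutoff p)) *\<^sub>R (0, c * snd p))"
    by (intro smooth_on_add smooth_on_scaleR_linear smooth_gen_mult smooth_gen_diff
        smooth_gen_const smooth_gen_saddle_cutoff bounded_linear_Pair bounded_linear_zero
        bounded_linear_compose[OF bounded_linear_mult_right] bounded_linear_fst bounded_linear_snd)
  then show ?thesis by (simp add: saddle_field_def[abs_def])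
qed

lemma saddle_cutoff_nonneg: "saddle_cutoff p \<ge> 0"
  and saddle_cutoff_le_1: "saddle_cutoff p \<le> 1"
  by (simp_all add: saddle_cutoff_def smooth_step_nonneg smooth_step_le_1)

lemma dlogH_saddle_field:
  assumes "l1 > 0" "l2 > 0" "fst p \<noteq> 0" "snd p \<noteq> 0"
  shows "dlogH l1 l2 p (saddle_field l1 l2 c p) = c"
  using assms by (simp add: dlogH_def saddle_field_def scaleR_conv_of_real field_simps)

lemma inner_mult_self_complex: "x \<bullet> (c * x) = Re c * (norm x)\<^sup>2"
  unfolding cmod_power2 by (simp add: inner_complex_def power2_eq_square algebra_simps)

lemma inner_saddle_field:
  "fst p \<bullet> fst (saddle_field l1 l2 c p) = l1 * saddle_cutoff p * Re c * (norm (fst p))\<^sup>2"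
  "snd p \<bullet> snd (saddle_field l1 l2 c p) = l2 * (1 - saddle_cutoff p) * Re c * (norm (snd p))\<^sup>2"
  by (simp_all add: saddle_field_def inner_mult_self_complex)

lemma flow_nonincreasing_saddle_field:
  assumes "l1 \<ge> 0" "l2 \<ge> 0" "Re c \<le> 0"
  shows "flow_nonincreasing S (saddle_field l1 l2 c) (\<lambda>p. norm (fst p))"
    and "flow_nonincreasing S (saddle_field l1 l2 c) (\<lambda>p. norm (snd p))"
proof -
  have "l1 * saddle_cutoff p * Re c \<le> 0" "l2 * (1 - saddle_cutoff p) * Re c \<le> 0" for p
    using assms saddle_cutoff_nonneg[of p] saddle_cutoff_le_1[of p]
    by (simp_all add: mult_nonneg_nonpos)
  then show "flow_nonincreasing S (saddle_field l1 l2 c) (\<lambda>p. norm (fst p))"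
    and "flow_nonincreasing S (saddle_field l1 l2 c) (\<lambda>p. norm (snd p))"
    by (metis flow_nonincreasing_norm_linear bounded_linear_fst bounded_linear_snd
        inner_saddle_field mult_nonpos_nonneg zero_le_power2)+
qed

lemma open_saddle_cutoff_level:
  "open {p. c < (norm (snd p))\<^sup>2 - (norm (fst p))\<^sup>2}" "open {p. (norm (snd p))\<^sup>2 - (norm (fst p))\<^sup>2 < c}"
  by (auto intro!: open_Collect_less continuous_intros)

lemma saddle_field_tangent_near_0_1:
  "\<exists>N. open N \<and> (0, 1) \<in> N \<and> (\<forall>c p. p \<in> N \<longrightarrow> snd (saddle_field l1 l2 c p) = 0)"
  using open_saddle_cutoff_level(1)[of "1/2"]
  by (intro exI[of _ "{p. 1/2 < (norm (snd p))\<^sup>2 - (norm (fst p))\<^sup>2}"])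
    (auto simp: saddle_field_def saddle_cutoff_def smooth_step_eq_1)

lemma saddle_field_tangent_near_1_0:
  "\<exists>N. open N \<and> (1, 0) \<in> N \<and> (\<forall>c p. p \<in> N \<longrightarrow> fst (saddle_field l1 l2 c p) = 0)"
  using open_saddle_cutoff_level(2)[of "-1/2"]
  by (intro exI[of _ "{p. (norm (snd p))\<^sup>2 - (norm (fst p))\<^sup>2 < -1/2}"])
    (auto simp: saddle_field_def saddle_cutoff_def smooth_step_eq_0)

theorem lemma3:
  fixes l1 l2 h :: real
  assumes "l1 > 0" and "l2 > 0" and "0 < h" and "h < 1"
  shows "\<exists>v1 vI :: complex \<times> complex \<Rightarrow> complex \<times> complex.
     smooth_on (Us l1 l2 h) v1 \<and> smooth_on (Us l1 l2 h) vI \<and>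
     (\<forall>p\<in>Us l1 l2 h. fst p \<noteq> 0 \<and> snd p \<noteq> 0 \<longrightarrow>
        dlogH l1 l2 p (v1 p) = 1 \<and> dlogH l1 l2 p (vI p) = \<i>) \<and>
     flow_nonincreasing (Us l1 l2 h) (\<lambda>p. - v1 p) (\<lambda>p. norm (fst p)) \<and>
     flow_nonincreasing (Us l1 l2 h) (\<lambda>p. - v1 p) (\<lambda>p. norm (snd p)) \<and>
     flow_nonincreasing (Us l1 l2 h) vI (\<lambda>p. norm (fst p)) \<and>
     flow_nonincreasing (Us l1 l2 h) vI (\<lambda>p. norm (snd p)) \<and>
     (\<exists>N. open N \<and> (0, 1) \<in> N \<and>
        (\<forall>p\<in>N \<inter> Us l1 l2 h. snd (v1 p) = 0 \<and> snd (vI p) = 0)) \<and>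
     (\<exists>N. open N \<and> (1, 0) \<in> N \<and>
        (\<forall>p\<in>N \<inter> Us l1 l2 h. fst (v1 p) = 0 \<and> fst (vI p) = 0))"
proof -
  let ?U = "Us l1 l2 h" and ?v = "saddle_field l1 l2"
  have minus_v1: "(\<lambda>p. - ?v 1 p) = ?v (-1)"
    by (simp add: fun_eq_iff saddle_field_def)
  have dlog: "\<forall>p\<in>?U. fst p \<noteq> 0 \<and> snd p \<noteq> 0 \<longrightarrow> dlogH l1 l2 p (?v 1 p) = 1 \<and> dlogH l1 l2 p (?v \<i> p) = \<i>"
    using assms by (simp add: dlogH_saddle_field)
  have "flow_nonincreasing ?U (\<lambda>p. - ?v 1 p) (\<lambda>p. norm (fst p))"
    "flow_nonincreasing ?U (\<lambda>p. - ?v 1 p) (\<lambda>p. norm (snd p))"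
    "flow_nonincreasing ?U (?v \<i>) (\<lambda>p. norm (fst p))"
    "flow_nonincreasing ?U (?v \<i>) (\<lambda>p. norm (snd p))"
    using assms unfolding minus_v1 by (simp_all add: flow_nonincreasing_saddle_field)
  moreover have "\<exists>N. open N \<and> (0, 1) \<in> N \<and> (\<forall>p\<in>N \<inter> ?U. snd (?v 1 p) = 0 \<and> snd (?v \<i> p) = 0)"
    using saddle_field_tangent_near_0_1 by fast
  moreover have "\<exists>N. open N \<and> (1, 0) \<in> N \<and> (\<forall>p\<in>N \<inter> ?U. fst (?v 1 p) = 0 \<and> fst (?v \<i> p) = 0)"
    using saddle_field_tangent_near_1_0 by fast
  ultimately show ?thesis
    using smooth_on_saddle_field dlog by blast
qed

end
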